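(* Let $(X,\Psi)$ be a $\sigma$-totally bounded uniform space and $Y\subseteq X$. The following are equivalent: (1) $(X,\Psi)$ satisfies $\textsf{S}_1(\mathcal{O}_\Psi,\mathcal{O}_Y)$; (2) ONE has no winning strategy in the game ${\sf G}_1(\mathcal{O}_\Psi,\mathcal{O}_Y)$.
   Context: A uniformity on $X$ is a filter $\Psi$ on $X\times X$ whose members contain the diagonal $\Delta_X$, closed under $U\mapsto U^{-1}=\{(y,x):(x,y)\in U\}$, such that for each $U\in\Psi$ there is $V\in\Psi$ with $V\circ V\subseteq U$, and with $\bigcap\Psi=\Delta_X$. For $U\in\Psi$, $U(x)=\{y:(x,y)\in U\}$, and $X$ carries the topology in which $\{U(x):U\in\Psi\}$ is a neighbourhood base at $x$. A subset $K$ is totally bounded if for each $U\in\Psi$ there is a finite $F\subseteq X$ with $K\subseteq\bigcup_{x\in F}U(x)$; $X$ is $\sigma$-totally bounded if it is a countable union of totally bounded subsets. For $N\in\Psi$, $\mathcal{O}(N)=\{\mathrm{Int}(N(x)):x\in X\}$, and $\mathcal{O}_\Psi=\{\mathcal{O}(N):N\in\Psi\}$. $\mathcal{O}_Y$ is the set of families of open subsets of $X$ whose union contains $Y$. $\textsf{S}_1(\mathcal{A},\mathcal{B})$: for every sequence $(O_n)$ of elements of $\mathcal{A}$ there are $T_n\in O_n$ with $\{T_n:n\in\mathbb{N}\}\in\mathcal{B}$. Game ${\sf G}_1(\mathcal{A},\mathcal{B})$: in inning $n$ ONE chooses $O_n\in\mathcal{A}$, TWO responds with $T_n\in O_n$;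 TWO wins if $\{T_n:n\in\mathbb{N}\}\in\mathcal{B}$, else ONE wins. *)

theory Defs
  imports Main
begin

definition uniformity :: "'a set \<Rightarrow> ('a \<times> 'a) set set \<Rightarrow> bool" where
  "uniformity X Psi \<longleftrightarrow>
     Psi \<noteq> {} \<and>
     (\<forall>U\<in>Psi. U \<subseteq> X \<times> X) \<and>
     (\<forall>U\<in>Psi. \<forall>V. U \<subseteq> V \<and> V \<subseteq> X \<times> X \<longrightarrow> V \<in> Psi) \<and>
     (\<forall>U\<in>Psi. \<forall>V\<in>Psi. U \<inter> V \<in> Psi) \<and>
     (\<forall>U\<in>Psi. Id_on X \<subseteq> U) \<and>
     (\<forall>U\<in>Psi. U\<inverse> \<in> Psi) \<and>
     (\<forall>U\<in>Psi. \<exists>V\<in>Psi. V O V \<subseteq> U) \<and>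
     \<Inter>Psi = Id_on X"

text \<open>Open sets of the uniform topology: U(x) = U `` {x} is a neighbourhood base at x.\<close>
definition uopen :: "'a set \<Rightarrow> ('a \<times> 'a) set set \<Rightarrow> 'a set \<Rightarrow> bool" where
  "uopen X Psi G \<longleftrightarrow> G \<subseteq> X \<and> (\<forall>x\<in>G. \<exists>U\<in>Psi. U `` {x} \<subseteq> G)"

definition uinterior :: "'a set \<Rightarrow> ('a \<times> 'a) set set \<Rightarrow> 'a set \<Rightarrow> 'a set" where
  "uinterior X Psi A = \<Union>{G. uopen X Psi G \<and> G \<subseteq> A}"

definition totally_bounded_u :: "'a set \<Rightarrow> ('a \<times> 'a) set set \<Rightarrow> 'a set \<Rightarrow> bool" where
  "totally_bounded_u X Psi K \<longleftrightarrow> K \<subseteq> X \<and>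
     (\<forall>U\<in>Psi. \<exists>F. finite F \<and> F \<subseteq> X \<and> K \<subseteq> (\<Union>x\<in>F. U `` {x}))"

definition sigma_totally_bounded :: "'a set \<Rightarrow> ('a \<times> 'a) set set \<Rightarrow> bool" where
  "sigma_totally_bounded X Psi \<longleftrightarrow>
     (\<exists>K :: nat \<Rightarrow> 'a set. X = (\<Union>n. K n) \<and> (\<forall>n. totally_bounded_u X Psi (K n)))"

definition OcovN :: "'a set \<Rightarrow> ('a \<times> 'a) set set \<Rightarrow> ('a \<times> 'a) set \<Rightarrow> 'a set set" where
  "OcovN X Psi N = {uinterior X Psi (N `` {x}) | x. x \<in> X}"

definition O_Psi :: "'a set \<Rightarrow> ('a \<times> 'a) set set \<Rightarrow> 'a set set set" where
  "O_Psi X Psi = {OcovN X Psi N | N. N \<in> Psi}"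

definition O_cov :: "'a set \<Rightarrow> ('a \<times> 'a) set set \<Rightarrow> 'a set \<Rightarrow> 'a set set set" where
  "O_cov X Psi Y = {\<U>. (\<forall>G\<in>\<U>. uopen X Psi G) \<and> Y \<subseteq> \<Union>\<U>}"

definition S1 :: "'b set set set \<Rightarrow> 'b set set set \<Rightarrow> bool" where
  "S1 A B \<longleftrightarrow> (\<forall>Os :: nat \<Rightarrow> 'b set set. (\<forall>n. Os n \<in> A) \<longrightarrow>
      (\<exists>T :: nat \<Rightarrow> 'b set. (\<forall>n. T n \<in> Os n) \<and> range T \<in> B))"

text \<open>A strategy for ONE in G_1(A,B): given the list of TWO's previous moves,
  ONE chooses an element of A.\<close>
definition one_strategy :: "'b set set set \<Rightarrow> ('b set list \<Rightarrow> 'b set set) \<Rightarrow> bool" where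
  "one_strategy A \<sigma> \<longleftrightarrow> (\<forall>h. \<sigma> h \<in> A)"

definition follows :: "('b set list \<Rightarrow> 'b set set) \<Rightarrow> (nat \<Rightarrow> 'b set) \<Rightarrow> bool" where
  "follows \<sigma> T \<longleftrightarrow> (\<forall>n. T n \<in> \<sigma> (map T [0..<n]))"

definition one_winning_G1 :: "'b set set set \<Rightarrow> 'b set set set \<Rightarrow> ('b set list \<Rightarrow> 'b set set) \<Rightarrow> bool" where
  "one_winning_G1 A B \<sigma> \<longleftrightarrow> one_strategy A \<sigma> \<and> (\<forall>T. follows \<sigma> T \<longrightarrow> range T \<notin> B)"

end

theory Submission
  imports Defs "HOL-Library.Nat_Bijection"
begin

(* Let ONE's strategy answer a history h with O(N_h), and let X be the union of the totally
   bounded sets K_m.  Choose V_h with V_h O V_h O V_h \<subseteq> N_h and a finite V_h-net of K_m;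
   if TWO only answers with the sets Int(N_h(z)), z in such a net, then only finitely many
   histories of each length can occur, so the intersection M_n of the entourages V_h \<inter> V_h\<inverse>
   over the histories of length n is again an entourage.  Every member of O(M_n) that meets
   K_m lies inside one of TWO's admissible answers.  Applying S_1 to the sequences
   (O(M_<m,k>))_k, one for each m, yields sets covering Y, and TWO, answering at stage
   <m,k> with an admissible move containing the selected set, covers Y against the strategy.
   Conversely, a sequence witnessing the failure of S_1 is a winning strategy for ONE that
   ignores TWO's moves. *)

lemma uniformity_Int:
  "uniformity X Psi \<Longrightarrow> U \<in> Psi \<Longrightarrow> V \<in> Psi \<Longrightarrow> U \<inter> V \<in> Psi"
  unfolding uniformity_def by meson

lemma uniformity_converse: "uniformity X Psi \<Longrightarrow> U \<in> Psi \<Longrightarrow> U\<inverse> \<in> Psi"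
  unfolding uniformity_def by meson

lemma uniformity_Inter:
  assumes u: "uniformity X Psi" and "finite S" "S \<noteq> {}" "S \<subseteq> Psi"
  shows "\<Inter>S \<in> Psi"
  using assms(2-4)
proof (induction S rule: finite_ne_induct)
  case (singleton U)
  then show ?case by simp
next
  case (insert U S)
  then show ?case using uniformity_Int[OF u] by simp
qed

lemma uniformity_subset: "uniformity X Psi \<Longrightarrow> U \<in> Psi \<Longrightarrow> U \<subseteq> X \<times> X"
  unfolding uniformity_def by meson

lemma uniformity_Id_on: "uniformity X Psi \<Longrightarrow> U \<in> Psi \<Longrightarrow> Id_on X \<subseteq> U"
  unfolding uniformity_def by meson

lemma uniformity_half: "uniformity X Psi \<Longrightarrow> U \<in> Psi \<Longrightarrow> \<exists>V\<in>Psi. V O V \<subseteq> U"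
  unfolding uniformity_def by meson

lemma uniformity_subset_relcomp:
  assumes "uniformity X Psi" "U \<in> Psi"
  shows "U \<subseteq> U O U"
proof
  fix p assume "p \<in> U"
  moreover obtain a b where "p = (a, b)" by fastforce
  ultimately have "(b, b) \<in> U"
    using uniformity_subset[OF assms] uniformity_Id_on[OF assms] by blast
  with \<open>p \<in> U\<close> \<open>p = (a, b)\<close> show "p \<in> U O U" by blast
qed

lemma uniformity_relcomp3:
  assumes u: "uniformity X Psi" and "N \<in> Psi"
  obtains V where "V \<in> Psi" "V O V O V \<subseteq> N"
proof -
  obtain V1 where V1: "V1 \<in> Psi" "V1 O V1 \<subseteq> N"
    using uniformity_half[OF assms] by blast
  obtain V where V: "V \<in> Psi" "V O V \<subseteq> V1"
    using uniformity_half[OF u V1(1)] by blast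
  have "V \<subseteq> V1"
    using uniformity_subset_relcomp[OF u V(1)] V(2) by blast
  then have "V O V O V \<subseteq> N"
    using V(2) V1(2) by blast
  with V(1) show thesis by (rule that)
qed

lemma uinterior_subset: "uinterior X Psi A \<subseteq> A"
  unfolding uinterior_def by auto

lemma uinterior_mono: "A \<subseteq> B \<Longrightarrow> uinterior X Psi A \<subseteq> uinterior X Psi B"
  unfolding uinterior_def by auto

lemma uopen_uinterior: "uopen X Psi (uinterior X Psi A)"
  unfolding uopen_def
proof (intro conjI ballI)
  show "uinterior X Psi A \<subseteq> X"
    unfolding uinterior_def uopen_def by blast
  fix x assume "x \<in> uinterior X Psi A"
  then obtain G where G: "uopen X Psi G" "G \<subseteq> A" "x \<in> G"
    unfolding uinterior_def by blast
  then obtain U where "U \<in> Psi" "U `` {x} \<subseteq> G"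
    unfolding uopen_def by blast
  moreover have "G \<subseteq> uinterior X Psi A"
    using G unfolding uinterior_def by blast
  ultimately show "\<exists>U\<in>Psi. U `` {x} \<subseteq> uinterior X Psi A" by blast
qed

lemma uopen_OcovN: "G \<in> OcovN X Psi N \<Longrightarrow> uopen X Psi G"
  by (auto simp: OcovN_def uopen_uinterior)

lemma OcovN_in_O_Psi: "N \<in> Psi \<Longrightarrow> OcovN X Psi N \<in> O_Psi X Psi"
  unfolding O_Psi_def by blast

lemma S1_O_Psi_nonempty:
  assumes u: "uniformity X Psi" and S: "S1 (O_Psi X Psi) B"
  shows "X \<noteq> {}"
proof -
  have "Psi \<noteq> {}"
    using u unfolding uniformity_def by meson
  then obtain N where "N \<in> Psi" by blast
  then obtain T where "\<forall>n::nat. T n \<in> OcovN X Psi N"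
    using S[unfolded S1_def, rule_format, of "\<lambda>_. OcovN X Psi N"] OcovN_in_O_Psi by blast
  then show ?thesis unfolding OcovN_def by blast
qed

lemma OcovN_finite_refinement:
  assumes u: "uniformity X Psi" and N: "N \<in> Psi"
    and K: "totally_bounded_u X Psi K" and "X \<noteq> {}"
  shows "\<exists>W\<in>Psi. \<exists>A. finite A \<and> A \<noteq> {} \<and> A \<subseteq> OcovN X Psi N \<and>
           (\<forall>M G. M \<subseteq> W \<longrightarrow> G \<in> OcovN X Psi M \<longrightarrow> G \<inter> K \<noteq> {} \<longrightarrow> (\<exists>B\<in>A. G \<subseteq> B))"
proof -
  obtain V where V: "V \<in> Psi" "V O V O V \<subseteq> N"
    using uniformity_relcomp3[OF u N] by blast
  obtain F where F: "finite F" "F \<subseteq> X" "K \<subseteq> (\<Union>z\<in>F. V `` {z})"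
    using K V(1) unfolding totally_bounded_u_def by blast
  obtain x0 where x0: "x0 \<in> X" using \<open>X \<noteq> {}\<close> by blast
  define A where "A = (\<lambda>z. uinterior X Psi (N `` {z})) ` insert x0 F"
  have refines: "\<exists>B\<in>A. G \<subseteq> B"
    if M: "M \<subseteq> V \<inter> V\<inverse>" and G: "G \<in> OcovN X Psi M" and meets: "G \<inter> K \<noteq> {}" for M G
  proof -
    obtain x where G_eq: "G = uinterior X Psi (M `` {x})"
      using G unfolding OcovN_def by blast
    obtain y where y: "y \<in> G" "y \<in> K" using meets by blast
    then obtain z where z: "z \<in> F" "(z, y) \<in> V" using F(3) by blast
    have "(x, y) \<in> M"
      using y(1) uinterior_subset[of X Psi "M `` {x}"] unfolding G_eq by blast
    have "M `` {x} \<subseteq> N `` {z}"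
    proof
      fix w assume "w \<in> M `` {x}"
      then have "(x, w) \<in> V" using M by blast
      moreover have "(y, x) \<in> V" using \<open>(x, y) \<in> M\<close> M by blast
      ultimately have "(z, w) \<in> V O V O V" using z(2) by blast
      then show "w \<in> N `` {z}" using V(2) by blast
    qed
    then have "G \<subseteq> uinterior X Psi (N `` {z})"
      unfolding G_eq by (rule uinterior_mono)
    then show ?thesis using z(1) unfolding A_def by blast
  qed
  show ?thesis
  proof (intro bexI[of _ "V \<inter> V\<inverse>"] exI[of _ A] conjI allI impI)
    show "finite A" "A \<noteq> {}"
      using F(1) unfolding A_def by simp_all
    show "A \<subseteq> OcovN X Psi N"
      using F(2) x0 unfolding A_def OcovN_def by auto
    show "V \<inter> V\<inverse> \<in> Psi"
      using V(1) uniformity_Int[OF u] uniformity_converse[OF u] by blast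
  qed (rule refines)
qed

lemma S1_rowwise:
  assumes S: "S1 A B" and Os: "\<And>n. Os n \<in> A"
  shows "\<exists>T. (\<forall>n. T n \<in> Os n) \<and> (\<forall>m. range (\<lambda>k. T (prod_encode (m, k))) \<in> B)"
proof -
  have "\<exists>R. (\<forall>k. R k \<in> Os (prod_encode (m, k))) \<and> range R \<in> B" for m
    using S[unfolded S1_def, rule_format, of "\<lambda>k. Os (prod_encode (m, k))"] Os by blast
  then obtain R where R: "\<And>m k. R m k \<in> Os (prod_encode (m, k))" "\<And>m. range (R m) \<in> B"
    by metis
  define T where "T n = R (fst (prod_decode n)) (snd (prod_decode n))" for n
  have "T n \<in> Os n" for n
    using R(1)[of "fst (prod_decode n)" "snd (prod_decode n)"]
    by (simp add: T_def prod_decode_inverse)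
  moreover have "range (\<lambda>k. T (prod_encode (m, k))) \<in> B" for m
    using R(2)[of m] by (simp add: T_def prod_encode_inverse)
  ultimately show ?thesis by blast
qed

lemma ex_course_of_values_seq: "\<exists>P. \<forall>n. P n = ch (map P [0..<n]) n"
proof -
  define H where "H = rec_nat [] (\<lambda>n h. h @ [ch h n])"
  define P where "P n = ch (H n) n" for n
  have H: "H n = map P [0..<n]" for n
    by (induction n) (simp_all add: H_def P_def)
  have "P n = ch (map P [0..<n]) n" for n
    using P_def[of n] by (simp only: H)
  then show ?thesis by blast
qed

primrec histories :: "('b list \<Rightarrow> nat \<Rightarrow> 'b set) \<Rightarrow> nat \<Rightarrow> 'b list set" where
  "histories A 0 = {[]}"
| "histories A (Suc n) = (\<Union>h\<in>histories A n. (\<lambda>b. h @ [b]) ` A h n)"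

lemma finite_histories: "(\<And>h n. finite (A h n)) \<Longrightarrow> finite (histories A n)"
  by (induction n) auto

lemma histories_nonempty: "(\<And>h n. A h n \<noteq> {}) \<Longrightarrow> histories A n \<noteq> {}"
  by (induction n) auto

lemma map_in_histories:
  assumes "\<And>n. P n \<in> A (map P [0..<n]) n"
  shows "map P [0..<n] \<in> histories A n"
proof (induction n)
  case 0
  then show ?case by simp
next
  case (Suc n)
  then show ?case using assms[of n] by force
qed

lemma ex_play_dominating:
  assumes "\<And>h n. A h n \<noteq> {}"
    and "\<And>h n. h \<in> histories A n \<Longrightarrow> T n \<inter> C n \<noteq> {} \<Longrightarrow> \<exists>B\<in>A h n. T n \<subseteq> B"
  shows "\<exists>P. \<forall>n. P n \<in> A (map P [0..<n]) n \<and> T n \<inter> C n \<subseteq> P n"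
proof -
  define ch where "ch h n =
    (if \<exists>B\<in>A h n. T n \<subseteq> B then SOME B. B \<in> A h n \<and> T n \<subseteq> B else SOME B. B \<in> A h n)" for h n
  have ch: "ch h n \<in> A h n \<and> ((\<exists>B\<in>A h n. T n \<subseteq> B) \<longrightarrow> T n \<subseteq> ch h n)" for h n
  proof (cases "\<exists>B\<in>A h n. T n \<subseteq> B")
    case True
    then have "\<exists>B. B \<in> A h n \<and> T n \<subseteq> B" by blast
    then have "(SOME B. B \<in> A h n \<and> T n \<subseteq> B) \<in> A h n \<and> T n \<subseteq> (SOME B. B \<in> A h n \<and> T n \<subseteq> B)"
      by (rule someI_ex)
    with True show ?thesis unfolding ch_def by simp
  next
    case False
    then show ?thesis using assms(1)[of h n] unfolding ch_def by (simp add: some_in_eq)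
  qed
  obtain P where P: "\<And>n. P n = ch (map P [0..<n]) n"
    using ex_course_of_values_seq by blast
  have P_ch: "P n \<in> A (map P [0..<n]) n \<and> ((\<exists>B\<in>A (map P [0..<n]) n. T n \<subseteq> B) \<longrightarrow> T n \<subseteq> P n)"
    for n using ch[of "map P [0..<n]" n] unfolding P[of n, symmetric] .
  have "T n \<inter> C n \<subseteq> P n" for n
  proof (cases "T n \<inter> C n = {}")
    case False
    have "map P [0..<n] \<in> histories A n"
      using P_ch by (blast intro: map_in_histories)
    then have "\<exists>B\<in>A (map P [0..<n]) n. T n \<subseteq> B" using False by (rule assms(2))
    then show ?thesis using P_ch by blast
  qed simp
  with P_ch show ?thesis by blast
qed

lemma not_one_winning_imp_S1:
  assumes "\<not> (\<exists>\<sigma>. one_winning_G1 A B \<sigma>)"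
  shows "S1 A B"
proof (rule ccontr)
  assume "\<not> S1 A B"
  then obtain Os where Os: "\<forall>n::nat. Os n \<in> A" "\<forall>T. (\<forall>n. T n \<in> Os n) \<longrightarrow> range T \<notin> B"
    unfolding S1_def by blast
  have "one_winning_G1 A B (\<lambda>h. Os (length h))"
    unfolding one_winning_G1_def one_strategy_def follows_def
  proof (intro conjI allI impI)
    show "Os (length h) \<in> A" for h using Os(1) ..
    fix T assume "\<forall>n. T n \<in> Os (length (map T [0..<n]))"
    then show "range T \<notin> B" using Os(2) by simp
  qed
  with assms show False by blast
qed

lemma finite_answers_to_strategy:
  assumes u: "uniformity X Psi" and "X \<noteq> {}" and N: "\<And>h. N h \<in> Psi"
    and C: "\<And>n. totally_bounded_u X Psi (C n)"
  obtains A M where "\<And>h n. A h n \<noteq> {}" "\<And>h n. A h n \<subseteq> OcovN X Psi (N h)" "\<And>n. M n \<in> Psi"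
    "\<And>h n G. h \<in> histories A n \<Longrightarrow> G \<in> OcovN X Psi (M n) \<Longrightarrow> G \<inter> C n \<noteq> {} \<Longrightarrow>
              \<exists>B\<in>A h n. G \<subseteq> B"
proof -
  have "\<forall>h n. \<exists>W\<in>Psi. \<exists>A. finite A \<and> A \<noteq> {} \<and> A \<subseteq> OcovN X Psi (N h) \<and>
           (\<forall>M G. M \<subseteq> W \<longrightarrow> G \<in> OcovN X Psi M \<longrightarrow> G \<inter> C n \<noteq> {} \<longrightarrow> (\<exists>B\<in>A. G \<subseteq> B))"
    using OcovN_finite_refinement[OF u N C \<open>X \<noteq> {}\<close>] by blast
  then obtain W A where W: "\<And>h n. W h n \<in> Psi"
    and A: "\<And>h n. finite (A h n)" "\<And>h n. A h n \<noteq> {}" "\<And>h n. A h n \<subseteq> OcovN X Psi (N h)"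
    and refines: "\<And>h n M G. M \<subseteq> W h n \<Longrightarrow> G \<in> OcovN X Psi M \<Longrightarrow> G \<inter> C n \<noteq> {} \<Longrightarrow>
                              \<exists>B\<in>A h n. G \<subseteq> B"
    by metis
  define M where "M n = \<Inter>((\<lambda>h. W h n) ` histories A n)" for n
  have M: "M n \<in> Psi" for n
    unfolding M_def using W A(1,2)
    by (intro uniformity_Inter[OF u]) (auto simp: finite_histories histories_nonempty)
  have "\<exists>B\<in>A h n. G \<subseteq> B"
    if "h \<in> histories A n" "G \<in> OcovN X Psi (M n)" "G \<inter> C n \<noteq> {}" for h n G
  proof -
    have "M n \<subseteq> W h n"
      using that(1) unfolding M_def by blast
    then show ?thesis using that(2,3) by (rule refines)
  qed
  with A(2,3) M show thesis by (rule that)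
qed

lemma S1_imp_not_one_winning:
  assumes u: "uniformity X Psi" and "sigma_totally_bounded X Psi" and "Y \<subseteq> X"
    and S: "S1 (O_Psi X Psi) (O_cov X Psi Y)"
  shows "\<not> one_winning_G1 (O_Psi X Psi) (O_cov X Psi Y) \<sigma>"
proof
  assume win: "one_winning_G1 (O_Psi X Psi) (O_cov X Psi Y) \<sigma>"
  have "\<forall>h. \<exists>N. N \<in> Psi \<and> \<sigma> h = OcovN X Psi N"
    using win unfolding one_winning_G1_def one_strategy_def O_Psi_def by blast
  then obtain N where N: "\<And>h. N h \<in> Psi" "\<And>h. \<sigma> h = OcovN X Psi (N h)"
    by metis
  obtain K where K: "X = (\<Union>m::nat. K m)" "\<And>m. totally_bounded_u X Psi (K m)"
    using assms(2) unfolding sigma_totally_bounded_def by blast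
  have C: "totally_bounded_u X Psi (K (fst (prod_decode n)))" for n
    by (rule K(2))
  obtain A M
    where A: "\<And>h n. A h n \<noteq> {}" "\<And>h n. A h n \<subseteq> OcovN X Psi (N h)" and M: "\<And>n. M n \<in> Psi"
    and refines: "\<And>h n G. h \<in> histories A n \<Longrightarrow> G \<in> OcovN X Psi (M n) \<Longrightarrow>
                    G \<inter> K (fst (prod_decode n)) \<noteq> {} \<Longrightarrow> \<exists>B\<in>A h n. G \<subseteq> B"
    using finite_answers_to_strategy[where N = N and C = "\<lambda>n. K (fst (prod_decode n))",
                                     OF u S1_O_Psi_nonempty[OF u S] N(1) C] by blast
  obtain T where T: "\<And>n. T n \<in> OcovN X Psi (M n)"
    and T_covers: "\<And>m. range (\<lambda>k. T (prod_encode (m, k))) \<in> O_cov X Psi Y"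
    using S1_rowwise[OF S, of "\<lambda>n. OcovN X Psi (M n)"] OcovN_in_O_Psi[OF M] by blast
  obtain P where P: "\<And>n. P n \<in> A (map P [0..<n]) n"
    and P_covers: "\<And>n. T n \<inter> K (fst (prod_decode n)) \<subseteq> P n"
    using ex_play_dominating[of A T "\<lambda>n. K (fst (prod_decode n))", OF A(1) refines[OF _ T]]
    by blast
  have P_moves: "P n \<in> \<sigma> (map P [0..<n])" for n
    using P[of n] A(2) unfolding N(2) by blast
  have "Y \<subseteq> \<Union>(range P)"
  proof
    fix y assume "y \<in> Y"
    then obtain m where "y \<in> K m" using \<open>Y \<subseteq> X\<close> K(1) by blast
    moreover obtain k where "y \<in> T (prod_encode (m, k))"
      using T_covers[of m] \<open>y \<in> Y\<close> unfolding O_cov_def by blast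
    ultimately have "y \<in> P (prod_encode (m, k))"
      using P_covers[of "prod_encode (m, k)"] by (auto simp: prod_encode_inverse)
    then show "y \<in> \<Union>(range P)" by blast
  qed
  moreover have "uopen X Psi (P n)" for n
    using P_moves N(2) uopen_OcovN by metis
  ultimately have "range P \<in> O_cov X Psi Y"
    unfolding O_cov_def by blast
  moreover have "follows \<sigma> P"
    unfolding follows_def using P_moves by blast
  ultimately show False
    using win unfolding one_winning_G1_def by blast
qed

theorem theorem2p3:
  fixes X Y :: "'a set" and Psi :: "('a \<times> 'a) set set"
  assumes "uniformity X Psi"
    and "sigma_totally_bounded X Psi"
    and "Y \<subseteq> X"
  shows "S1 (O_Psi X Psi) (O_cov X Psi Y) \<longleftrightarrow>
         \<not> (\<exists>\<sigma>. one_winning_G1 (O_Psi X Psi) (O_cov X Psi Y) \<sigma>)"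
  using S1_imp_not_one_winning[OF assms] not_one_winning_imp_S1 by blast

end
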